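(* Let $X$ be a finite set with $|X|=n$ and let $\mathfrak{G}=\mathbf{G}_2(X)$ be the generalized Desargues configuration, with point set $\mathcal{P}_2(X)$ and lines the sets $\mathcal{P}_2(Z)$ for $3$-subsets $Z$ of $X$. For $H\subseteq\mathcal{P}_2(X)$ the following are equivalent: (a) $H$ is a hyperplane of $\mathfrak{G}$; (b) there is a nonempty proper subset $Z$ of $X$ such that $H=\mathcal{P}_2(Z)\cup\mathcal{P}_2(X\setminus Z)$. Consequently, the Veldkamp space of $\mathbf{G}_2(X)$ is the projective space $PG(n-2,2)$.
   Context: $\mathcal{P}_2(Y)$ is the set of $2$-subsets of $Y$. A subspace is a set of points containing every line meeting it in at least two points; a hyperplane is a proper subspace meeting every line. For distinct hyperplanes $H_1,H_2$ of a partial Steiner triple system with point set $S$, $H_1\pitchfork H_2:=S\setminus(H_1\triangle H_2)$; the Veldkamp space of the system is the incidence structure whose points are its hyperplanes and whose lines are the triples $\{H_1,H_2,H_1\pitchfork H_2\}$ for distinct hyperplanes $H_1,H_2$. $PG(d,2)$ denotes the $d$-dimensional projective space over the two-element field. *)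

theory Defs
  imports Main
begin

definition subspace :: "'p set \<Rightarrow> 'p set set \<Rightarrow> 'p set \<Rightarrow> bool" where
  "subspace S L A \<longleftrightarrow> A \<subseteq> S \<and> (\<forall>l\<in>L. 2 \<le> card (l \<inter> A) \<longrightarrow> l \<subseteq> A)"

definition hyperplane :: "'p set \<Rightarrow> 'p set set \<Rightarrow> 'p set \<Rightarrow> bool" where
  "hyperplane S L H \<longleftrightarrow> subspace S L H \<and> H \<noteq> S \<and> (\<forall>l\<in>L. l \<inter> H \<noteq> {})"

definition pitchfork :: "'p set \<Rightarrow> 'p set \<Rightarrow> 'p set \<Rightarrow> 'p set" where
  "pitchfork S H1 H2 = S - ((H1 - H2) \<union> (H2 - H1))"

definition veldkamp_points :: "'p set \<Rightarrow> 'p set set \<Rightarrow> 'p set set" where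
  "veldkamp_points S L = {H. hyperplane S L H}"

definition veldkamp_lines :: "'p set \<Rightarrow> 'p set set \<Rightarrow> 'p set set set" where
  "veldkamp_lines S L = {{H1, H2, pitchfork S H1 H2} | H1 H2.
      hyperplane S L H1 \<and> hyperplane S L H2 \<and> H1 \<noteq> H2}"

definition P2 :: "'a set \<Rightarrow> 'a set set" where
  "P2 Y = {A. A \<subseteq> Y \<and> card A = 2}"

definition desargues_points :: "'a set \<Rightarrow> 'a set set" where
  "desargues_points X = P2 X"

definition desargues_lines :: "'a set \<Rightarrow> 'a set set set" where
  "desargues_lines X = {P2 Z | Z. Z \<subseteq> X \<and> card Z = 3}"

text \<open>PG(d,2): vectors of GF(2)^(d+1) are modelled as subsets of {0..d}
  (characteristic sets), vector addition is symmetric difference; points are the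
  nonzero vectors and lines are the triples {u, v, u+v} for distinct points u, v.\<close>
definition pg_points :: "nat \<Rightarrow> nat set set" where
  "pg_points d = {A. A \<subseteq> {0..d} \<and> A \<noteq> {}}"

definition pg_lines :: "nat \<Rightarrow> nat set set set" where
  "pg_lines d = {{A, B, (A - B) \<union> (B - A)} | A B.
      A \<in> pg_points d \<and> B \<in> pg_points d \<and> A \<noteq> B}"

definition isomorphic_incidence ::
  "'p set \<Rightarrow> 'p set set \<Rightarrow> 'q set \<Rightarrow> 'q set set \<Rightarrow> bool" where
  "isomorphic_incidence P1 L1 P2' L2 \<longleftrightarrow>
     (\<exists>f. bij_betw f P1 P2' \<and> (\<lambda>l. f ` l) ` L1 = L2)"

end

theory Submission
  imports Defs
begin

text \<open>
  The subspace axiom says that a hyperplane \<open>H\<close> containing two sides of a triangle of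
  \<open>X\<close> contains the third, and the meeting axiom that it contains at least one side; so
  every triangle has an odd number of its sides in \<open>H\<close>. Choosing \<open>{x0, y0} \<notin> H\<close> and
  letting \<open>Z\<close> be \<open>x0\<close> together with its neighbours along pairs of \<open>H\<close>, the triangle
  through \<open>x0\<close> gives \<open>{x, y} \<in> H \<longleftrightarrow> (x \<in> Z \<longleftrightarrow> y \<in> Z)\<close>: \<open>H\<close> consists of the pairs
  not separated by the cut \<open>Z\<close>. A cut is determined by \<open>H\<close> up to complementation, so
  the hyperplanes correspond to the nonempty subsets of \<open>X - {x0}\<close>, and under this
  correspondence \<open>pitchfork\<close> becomes the symmetric difference, the vector addition of
  \<open>GF(2)^(n-1)\<close>.
\<close>

lemma pair_in_P2_iff: "{x, y} \<in> P2 Y \<longleftrightarrow> x \<noteq> y \<and> x \<in> Y \<and> y \<in> Y"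
  unfolding P2_def by (auto simp: card_insert_if)

lemma P2_E:
  assumes "A \<in> P2 Y"
  obtains x y where "x \<noteq> y" "x \<in> Y" "y \<in> Y" "A = {x, y}"
  using assms unfolding P2_def by (auto simp: card_2_iff)

lemma P2_eqI:
  assumes "A \<subseteq> P2 X" "B \<subseteq> P2 X"
    and "\<And>x y. x \<in> X \<Longrightarrow> y \<in> X \<Longrightarrow> x \<noteq> y \<Longrightarrow> {x, y} \<in> A \<longleftrightarrow> {x, y} \<in> B"
  shows "A = B"
proof -
  have "a \<in> A \<longleftrightarrow> a \<in> B" if "a \<in> P2 X" for a
    using that assms(3) by (auto elim!: P2_E)
  with assms(1,2) show ?thesis by blast
qed

lemma P2_triple:
  assumes "a \<noteq> b" "a \<noteq> c" "b \<noteq> c"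
  shows "P2 {a, b, c} = {{a, b}, {a, c}, {b, c}}"
  using assms by (auto simp: pair_in_P2_iff insert_commute elim!: P2_E)

lemma card_triple_Int_ge_2_iff:
  assumes "p \<noteq> q" "p \<noteq> r" "q \<noteq> r"
  shows "2 \<le> card ({p, q, r} \<inter> H) \<longleftrightarrow>
    (p \<in> H \<and> q \<in> H) \<or> (p \<in> H \<and> r \<in> H) \<or> (q \<in> H \<and> r \<in> H)"
  using assms by (cases "p \<in> H"; cases "q \<in> H"; cases "r \<in> H") (simp_all add: Int_insert_left)

lemma desargues_lines_eq:
  "desargues_lines X =
    {{{a, b}, {a, c}, {b, c}} | a b c. a \<in> X \<and> b \<in> X \<and> c \<in> X \<and> a \<noteq> b \<and> a \<noteq> c \<and> b \<noteq> c}"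
proof (intro set_eqI iffI)
  fix l assume "l \<in> desargues_lines X"
  then obtain a b c where "a \<in> X" "b \<in> X" "c \<in> X" "a \<noteq> b" "a \<noteq> c" "b \<noteq> c"
    and "l = P2 {a, b, c}"
    unfolding desargues_lines_def card_3_iff by blast
  then show "l \<in> {{{a, b}, {a, c}, {b, c}} | a b c.
      a \<in> X \<and> b \<in> X \<and> c \<in> X \<and> a \<noteq> b \<and> a \<noteq> c \<and> b \<noteq> c}"
    by (auto simp: P2_triple)
next
  fix l assume "l \<in> {{{a, b}, {a, c}, {b, c}} | a b c.
      a \<in> X \<and> b \<in> X \<and> c \<in> X \<and> a \<noteq> b \<and> a \<noteq> c \<and> b \<noteq> c}"
  then obtain a b c where "a \<in> X" "b \<in> X" "c \<in> X" "a \<noteq> b" "a \<noteq> c" "b \<noteq> c"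
    and "l = {{a, b}, {a, c}, {b, c}}"
    by blast
  then show "l \<in> desargues_lines X"
    unfolding desargues_lines_def by (intro CollectI exI[of _ "{a, b, c}"]) (simp add: P2_triple)
qed

lemma ball_desargues_lines_iff:
  "(\<forall>l\<in>desargues_lines X. P l) \<longleftrightarrow>
    (\<forall>a\<in>X. \<forall>b\<in>X. \<forall>c\<in>X. a \<noteq> b \<longrightarrow> a \<noteq> c \<longrightarrow> b \<noteq> c \<longrightarrow> P {{a, b}, {a, c}, {b, c}})"
  unfolding desargues_lines_eq by blast

text \<open>\<open>(p \<longleftrightarrow> q) \<longleftrightarrow> r\<close> holds iff an odd number of \<open>p, q, r\<close> hold.\<close>
definition odd_on_triangles :: "'a set \<Rightarrow> 'a set set \<Rightarrow> bool" where
  "odd_on_triangles X H \<longleftrightarrow> (\<forall>a\<in>X. \<forall>b\<in>X. \<forall>c\<in>X. a \<noteq> b \<longrightarrow> a \<noteq> c \<longrightarrow> b \<noteq> c \<longrightarrow>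
     (({a, b} \<in> H \<longleftrightarrow> {a, c} \<in> H) \<longleftrightarrow> {b, c} \<in> H))"

lemma desargues_hyperplane_iff:
  assumes "H \<subseteq> P2 X"
  shows "hyperplane (desargues_points X) (desargues_lines X) H \<longleftrightarrow>
    H \<noteq> P2 X \<and> odd_on_triangles X H"
proof -
  define closed_meeting where "closed_meeting l \<longleftrightarrow>
    (2 \<le> card (l \<inter> H) \<longrightarrow> l \<subseteq> H) \<and> l \<inter> H \<noteq> {}" for l
  have triangle: "closed_meeting {{a, b}, {a, c}, {b, c}} \<longleftrightarrow>
       (({a, b} \<in> H \<longleftrightarrow> {a, c} \<in> H) \<longleftrightarrow> {b, c} \<in> H)"
    if "a \<noteq> b" "a \<noteq> c" "b \<noteq> c" for a b c
  proof -
    have "{a, b} \<noteq> {a, c}" "{a, b} \<noteq> {b, c}" "{a, c} \<noteq> {b, c}"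
      using that by (auto simp: doubleton_eq_iff)
    from card_triple_Int_ge_2_iff[OF this, of H] show ?thesis
      unfolding closed_meeting_def by auto
  qed
  have "hyperplane (desargues_points X) (desargues_lines X) H \<longleftrightarrow>
      H \<noteq> P2 X \<and> (\<forall>l\<in>desargues_lines X. closed_meeting l)"
    using assms unfolding hyperplane_def subspace_def desargues_points_def closed_meeting_def
    by blast
  also have "\<dots> \<longleftrightarrow> H \<noteq> P2 X \<and> odd_on_triangles X H"
    unfolding ball_desargues_lines_iff odd_on_triangles_def using triangle by blast
  finally show ?thesis .
qed

definition unseparated :: "'a set \<Rightarrow> 'a set \<Rightarrow> 'a set set" where
  "unseparated X Z = P2 Z \<union> P2 (X - Z)"

lemma unseparated_pair_iff:
  assumes "x \<in> X" "y \<in> X" "x \<noteq> y"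
  shows "{x, y} \<in> unseparated X Z \<longleftrightarrow> (x \<in> Z \<longleftrightarrow> y \<in> Z)"
  using assms unfolding unseparated_def by (auto simp: pair_in_P2_iff)

lemma unseparated_subset: "Z \<subseteq> X \<Longrightarrow> unseparated X Z \<subseteq> P2 X"
  unfolding unseparated_def P2_def by auto

lemma unseparated_Diff: "Z \<subseteq> X \<Longrightarrow> unseparated X (X - Z) = unseparated X Z"
  unfolding unseparated_def by (simp add: double_diff Un_commute)

lemma odd_on_triangles_unseparated:
  assumes "H \<subseteq> P2 X" "H \<noteq> P2 X" "odd_on_triangles X H"
  obtains Z where "Z \<noteq> {}" "Z \<subset> X" "H = unseparated X Z"
proof -
  obtain A where "A \<in> P2 X" "A \<notin> H"
    using assms(1,2) by blast
  then obtain x0 y0 where x0y0: "x0 \<noteq> y0" "x0 \<in> X" "y0 \<in> X" "{x0, y0} \<notin> H"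
    by (auto elim: P2_E)
  define Z where "Z = insert x0 {x \<in> X. {x0, x} \<in> H}"
  have Z_iff: "w \<in> Z \<longleftrightarrow> w = x0 \<or> (w \<in> X \<and> {x0, w} \<in> H)" for w
    by (simp add: Z_def)
  have ZX: "Z \<subseteq> X"
    using x0y0 by (auto simp: Z_def)
  have "{x, y} \<in> H \<longleftrightarrow> (x \<in> Z \<longleftrightarrow> y \<in> Z)" if "x \<in> X" "y \<in> X" "x \<noteq> y" for x y
  proof (cases "x = x0 \<or> y = x0")
    case True
    then show ?thesis
      using that Z_iff[of x] Z_iff[of y] by (auto simp: insert_commute)
  next
    case False
    then have "x0 \<noteq> x" "x0 \<noteq> y"
      by auto
    from assms(3)[unfolded odd_on_triangles_def, rule_format, OF x0y0(2) that(1,2) this that(3)]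
    have "({x0, x} \<in> H \<longleftrightarrow> {x0, y} \<in> H) \<longleftrightarrow> {x, y} \<in> H" .
    then show ?thesis
      using that False Z_iff[of x] Z_iff[of y] by blast
  qed
  then have "H = unseparated X Z"
    by (intro P2_eqI[OF assms(1) unseparated_subset[OF ZX]]) (simp add: unseparated_pair_iff)
  moreover have "x0 \<in> Z" "y0 \<notin> Z"
    using x0y0 Z_iff[of x0] Z_iff[of y0] by blast+
  ultimately show thesis
    using that ZX x0y0(3) by blast
qed

lemma unseparated_hyperplane:
  assumes "Z \<noteq> {}" "Z \<subset> X"
  shows "hyperplane (desargues_points X) (desargues_lines X) (unseparated X Z)"
proof -
  have ZX: "Z \<subseteq> X"
    using assms(2) by blast
  obtain z w where zw: "z \<in> Z" "w \<in> X - Z"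
    using assms by blast
  then have "z \<in> X" "z \<noteq> w"
    using ZX by auto
  with zw have "{z, w} \<in> P2 X - unseparated X Z"
    by (simp add: pair_in_P2_iff unseparated_pair_iff)
  moreover have "odd_on_triangles X (unseparated X Z)"
    unfolding odd_on_triangles_def by (auto simp: unseparated_pair_iff)
  ultimately show ?thesis
    using desargues_hyperplane_iff[OF unseparated_subset[OF ZX]] by blast
qed

theorem desargues_hyperplane_iff_unseparated:
  assumes "H \<subseteq> P2 X"
  shows "hyperplane (desargues_points X) (desargues_lines X) H \<longleftrightarrow>
    (\<exists>Z. Z \<noteq> {} \<and> Z \<subset> X \<and> H = unseparated X Z)"
  using odd_on_triangles_unseparated[OF assms] unseparated_hyperplane
    desargues_hyperplane_iff[OF assms] by metis

lemma desargues_hyperplane_avoiding: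
  assumes "x0 \<in> X" "hyperplane (desargues_points X) (desargues_lines X) H"
  obtains W where "W \<subseteq> X - {x0}" "W \<noteq> {}" "H = unseparated X W"
proof -
  have HX: "H \<subseteq> P2 X"
    using assms(2) by (simp add: hyperplane_def subspace_def desargues_points_def)
  obtain Z where Z: "Z \<noteq> {}" "Z \<subset> X" "H = unseparated X Z"
    using assms(2) desargues_hyperplane_iff_unseparated[OF HX] by auto
  show thesis
  proof (cases "x0 \<in> Z")
    case True
    then show thesis
      using that[of "X - Z"] Z unseparated_Diff[of Z X] by blast
  next
    case False
    then show thesis
      using that[of Z] Z by blast
  qed
qed

definition separated_from :: "'a set \<Rightarrow> 'a \<Rightarrow> 'a set set \<Rightarrow> 'a set" where
  "separated_from X x0 H = {x \<in> X - {x0}. {x0, x} \<notin> H}"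

lemma separated_from_subset: "separated_from X x0 H \<subseteq> X - {x0}"
  by (auto simp: separated_from_def)

lemma separated_from_unseparated:
  assumes "x0 \<in> X" "W \<subseteq> X - {x0}"
  shows "separated_from X x0 (unseparated X W) = W"
proof (intro set_eqI)
  fix x
  show "x \<in> separated_from X x0 (unseparated X W) \<longleftrightarrow> x \<in> W"
  proof (cases "x \<in> X - {x0}")
    case True
    then show ?thesis
      using assms unseparated_pair_iff[of x0 X x W] by (auto simp: separated_from_def)
  next
    case False
    then show ?thesis
      using assms by (auto simp: separated_from_def)
  qed
qed

lemma separated_from_pitchfork:
  assumes "x0 \<in> X"
  shows "separated_from X x0 (pitchfork (P2 X) H1 H2) =
    (separated_from X x0 H1 - separated_from X x0 H2) \<union>
    (separated_from X x0 H2 - separated_from X x0 H1)"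
  using assms by (auto simp: separated_from_def pitchfork_def pair_in_P2_iff)

lemma bij_betw_separated_from:
  assumes "x0 \<in> X"
  shows "bij_betw (separated_from X x0)
    (veldkamp_points (desargues_points X) (desargues_lines X)) (Pow (X - {x0}) - {{}})"
proof -
  have coordinates: "separated_from X x0 H \<in> Pow (X - {x0}) - {{}}"
      "unseparated X (separated_from X x0 H) = H"
    if "H \<in> veldkamp_points (desargues_points X) (desargues_lines X)" for H
  proof -
    from that have "hyperplane (desargues_points X) (desargues_lines X) H"
      by (simp add: veldkamp_points_def)
    then obtain W where "W \<subseteq> X - {x0}" "W \<noteq> {}" "H = unseparated X W"
      by (rule desargues_hyperplane_avoiding[OF assms])
    then show "separated_from X x0 H \<in> Pow (X - {x0}) - {{}}"
        "unseparated X (separated_from X x0 H) = H"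
      using separated_from_unseparated[OF assms] by simp_all
  qed
  have hyperplanes: "unseparated X W \<in> veldkamp_points (desargues_points X) (desargues_lines X)"
    if "W \<in> Pow (X - {x0}) - {{}}" for W
    using assms that by (auto simp: veldkamp_points_def intro!: unseparated_hyperplane)
  show ?thesis
  proof (rule bij_betw_byWitness[where f' = "unseparated X"])
    show "\<forall>H\<in>veldkamp_points (desargues_points X) (desargues_lines X).
        unseparated X (separated_from X x0 H) = H"
      using coordinates by simp
    show "\<forall>W\<in>Pow (X - {x0}) - {{}}. separated_from X x0 (unseparated X W) = W"
      using separated_from_unseparated[OF assms] by simp
    show "separated_from X x0 ` veldkamp_points (desargues_points X) (desargues_lines X)
        \<subseteq> Pow (X - {x0}) - {{}}"
      using coordinates by auto
    show "unseparated X ` (Pow (X - {x0}) - {{}})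
        \<subseteq> veldkamp_points (desargues_points X) (desargues_lines X)"
      using hyperplanes by auto
  qed
qed

lemma bij_betw_image_Pow_nonempty:
  "bij_betw f A B \<Longrightarrow> bij_betw (image f) (Pow A - {{}}) (Pow B - {{}})"
  by (rule bij_betw_DiffI) (auto intro: bij_betw_Pow)

lemma image_symmetric_difference:
  assumes "inj_on f C" "A \<subseteq> C" "B \<subseteq> C"
  shows "f ` ((A - B) \<union> (B - A)) = (f ` A - f ` B) \<union> (f ` B - f ` A)"
proof -
  have "A - B \<subseteq> C" "B - A \<subseteq> C"
    using assms(2,3) by blast+
  then show ?thesis
    using assms by (simp add: image_Un inj_on_image_set_diff)
qed

lemma isomorphic_incidence_symmetric_difference:
  assumes bij: "bij_betw f V P"
    and sum: "\<And>a b. a \<in> V \<Longrightarrow> b \<in> V \<Longrightarrow> f (s a b) = (f a - f b) \<union> (f b - f a)"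
  shows "isomorphic_incidence V {{a, b, s a b} | a b. a \<in> V \<and> b \<in> V \<and> a \<noteq> b}
    P {{A, B, (A - B) \<union> (B - A)} | A B. A \<in> P \<and> B \<in> P \<and> A \<noteq> B}"
  unfolding isomorphic_incidence_def
proof (intro exI conjI)
  have inj: "inj_on f V" and surj: "f ` V = P"
    using bij by (auto simp: bij_betw_def)
  show "bij_betw f V P"
    by (fact bij)
  show "(\<lambda>l. f ` l) ` {{a, b, s a b} | a b. a \<in> V \<and> b \<in> V \<and> a \<noteq> b} =
      {{A, B, (A - B) \<union> (B - A)} | A B. A \<in> P \<and> B \<in> P \<and> A \<noteq> B}"
  proof (intro set_eqI iffI)
    fix m assume "m \<in> (\<lambda>l. f ` l) ` {{a, b, s a b} | a b. a \<in> V \<and> b \<in> V \<and> a \<noteq> b}"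
    then obtain a b where ab: "a \<in> V" "b \<in> V" "a \<noteq> b" "m = f ` {a, b, s a b}"
      by blast
    then have "m = {f a, f b, (f a - f b) \<union> (f b - f a)}" "f a \<noteq> f b"
      using sum inj by (auto simp: inj_on_eq_iff)
    with ab surj show "m \<in> {{A, B, (A - B) \<union> (B - A)} | A B. A \<in> P \<and> B \<in> P \<and> A \<noteq> B}"
      by blast
  next
    fix m assume "m \<in> {{A, B, (A - B) \<union> (B - A)} | A B. A \<in> P \<and> B \<in> P \<and> A \<noteq> B}"
    then obtain a b where "a \<in> V" "b \<in> V" "f a \<noteq> f b"
      and "m = {f a, f b, (f a - f b) \<union> (f b - f a)}"
      using surj by blast
    with sum show "m \<in> (\<lambda>l. f ` l) ` {{a, b, s a b} | a b. a \<in> V \<and> b \<in> V \<and> a \<noteq> b}"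
      by (intro image_eqI[of _ _ "{a, b, s a b}"]) auto
  qed
qed

lemma veldkamp_lines_eq:
  "veldkamp_lines S L = {{H1, H2, pitchfork S H1 H2} | H1 H2.
    H1 \<in> veldkamp_points S L \<and> H2 \<in> veldkamp_points S L \<and> H1 \<noteq> H2}"
  by (simp add: veldkamp_lines_def veldkamp_points_def)

theorem theorem4p1:
  fixes X :: "'a set"
  assumes "finite X"
  shows "(\<forall>H. H \<subseteq> P2 X \<longrightarrow>
            (hyperplane (desargues_points X) (desargues_lines X) H \<longleftrightarrow>
             (\<exists>Z. Z \<noteq> {} \<and> Z \<subset> X \<and> H = P2 Z \<union> P2 (X - Z))))
       \<and> (2 \<le> card X \<longrightarrow>
            isomorphic_incidence
              (veldkamp_points (desargues_points X) (desargues_lines X))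
              (veldkamp_lines (desargues_points X) (desargues_lines X))
              (pg_points (card X - 2)) (pg_lines (card X - 2)))"
proof (intro conjI allI impI)
  fix H :: "'a set set"
  assume "H \<subseteq> P2 X"
  then show "hyperplane (desargues_points X) (desargues_lines X) H \<longleftrightarrow>
      (\<exists>Z. Z \<noteq> {} \<and> Z \<subset> X \<and> H = P2 Z \<union> P2 (X - Z))"
    by (simp add: desargues_hyperplane_iff_unseparated unseparated_def)
next
  assume "2 \<le> card X"
  then obtain x0 where x0: "x0 \<in> X"
    by fastforce
  obtain g where g: "bij_betw g (X - {x0}) {0..<card (X - {x0})}"
    using ex_bij_betw_finite_nat assms by blast
  have "Pow {0..<card (X - {x0})} - {{}} = pg_points (card X - 2)"
    using x0 assms \<open>2 \<le> card X\<close> by (auto simp: pg_points_def)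
  then have "bij_betw (image g \<circ> separated_from X x0)
      (veldkamp_points (desargues_points X) (desargues_lines X)) (pg_points (card X - 2))"
    using bij_betw_trans[OF bij_betw_separated_from[OF x0] bij_betw_image_Pow_nonempty[OF g]]
    by simp
  moreover have "(image g \<circ> separated_from X x0) (pitchfork (desargues_points X) H1 H2) =
      ((image g \<circ> separated_from X x0) H1 - (image g \<circ> separated_from X x0) H2) \<union>
      ((image g \<circ> separated_from X x0) H2 - (image g \<circ> separated_from X x0) H1)" for H1 H2
    using image_symmetric_difference[OF bij_betw_imp_inj_on[OF g] separated_from_subset separated_from_subset]
    by (simp add: desargues_points_def separated_from_pitchfork[OF x0])
  ultimately show "isomorphic_incidence
      (veldkamp_points (desargues_points X) (desargues_lines X))
      (veldkamp_lines (desargues_points X) (desargues_lines X))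
      (pg_points (card X - 2)) (pg_lines (card X - 2))"
    unfolding veldkamp_lines_eq pg_lines_def by (rule isomorphic_incidence_symmetric_difference)
qed

end
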